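(* Let $k\ge1$ be an integer, let $G$ be a graph and let $A,B\subseteq V(G)$ satisfy $\mathrm{dist}(A,B)>2^k$ and \[\mathrm{tp}_k\big(G\langle X\mapsto A\rangle[N_{2^{k-1}-1}[A]]\big)=\mathrm{tp}_k\big(G\langle X\mapsto B\rangle[N_{2^{k-1}-1}[B]]\big).\] Let $\bar w\in V(G)^{|\bar y|}$ be a tuple of vertices with $\mathrm{dist}(\bar w,A\cup B)\ge 2^k$. Then for every first-order formula $\varphi(\bar y,x)$ of quantifier rank at most $k-1$ in the signature of $G$, \[G\langle A\rangle\models\exists x\in A\ \varphi(\bar w,x)\iff G\langle B\rangle\models\exists x\in B\ \varphi(\bar w,x).\]
   Context: Graphs are finite, loopless, undirected, with finitely many unary color predicates. $\mathrm{dist}(\bar a,\bar b)$ is the minimum distance between an element of $\bar a$ and one of $\bar b$ (sets or tuples); $N_r[S]$ is the set of vertices at distance at most $r$ from $S$. $G\langle X\mapsto W\rangle$ is $G$ expanded by a new unary predicate $X$ interpreted as $W$; $G\langle W\rangle$ denotes the expansion by a new unary predicate (also named $W$) interpreted as $W$, and $\exists x\in W\,\psi$ abbreviates $\exists x\,(W(x)\wedge\psi)$. $H[S]$ is the induced substructure (colors restricted). $\mathrm{tp}_k(H)$ is the set of first-order sentences of quantifier rank at most $k$ (over the signature of $H$) true in $H$; equality of types means the two structures satisfy the same such sentences. *)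

theory Defs
  imports Main "HOL-Library.Extended_Nat"
begin

record ('a, 'c) cgraph =
  verts :: "'a set"
  adj   :: "'a \<Rightarrow> 'a \<Rightarrow> bool"
  colr  :: "'c \<Rightarrow> 'a set"

definition wf_cgraph :: "('a, 'c) cgraph \<Rightarrow> bool" where
  "wf_cgraph G \<longleftrightarrow> finite (verts G)
     \<and> (\<forall>u v. adj G u v \<longrightarrow> u \<in> verts G \<and> v \<in> verts G)
     \<and> (\<forall>u v. adj G u v \<longrightarrow> adj G v u)
     \<and> (\<forall>u. \<not> adj G u u)
     \<and> (\<forall>c. colr G c \<subseteq> verts G)"

datatype 'c fm =
    Eq nat nat
  | Adj nat nat
  | Col 'c nat
  | Neg "'c fm"
  | Conj "'c fm" "'c fm"
  | Ex nat "'c fm"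

fun qr :: "'c fm \<Rightarrow> nat" where
  "qr (Eq x y) = 0"
| "qr (Adj x y) = 0"
| "qr (Col c x) = 0"
| "qr (Neg \<phi>) = qr \<phi>"
| "qr (Conj \<phi> \<psi>) = max (qr \<phi>) (qr \<psi>)"
| "qr (Ex x \<phi>) = Suc (qr \<phi>)"

fun fv :: "'c fm \<Rightarrow> nat set" where
  "fv (Eq x y) = {x, y}"
| "fv (Adj x y) = {x, y}"
| "fv (Col c x) = {x}"
| "fv (Neg \<phi>) = fv \<phi>"
| "fv (Conj \<phi> \<psi>) = fv \<phi> \<union> fv \<psi>"
| "fv (Ex x \<phi>) = fv \<phi> - {x}"

fun sat :: "('a, 'c) cgraph \<Rightarrow> (nat \<Rightarrow> 'a) \<Rightarrow> 'c fm \<Rightarrow> bool" where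
  "sat H \<nu> (Eq x y) \<longleftrightarrow> \<nu> x = \<nu> y"
| "sat H \<nu> (Adj x y) \<longleftrightarrow> adj H (\<nu> x) (\<nu> y)"
| "sat H \<nu> (Col c x) \<longleftrightarrow> \<nu> x \<in> colr H c"
| "sat H \<nu> (Neg \<phi>) \<longleftrightarrow> \<not> sat H \<nu> \<phi>"
| "sat H \<nu> (Conj \<phi> \<psi>) \<longleftrightarrow> sat H \<nu> \<phi> \<and> sat H \<nu> \<psi>"
| "sat H \<nu> (Ex x \<phi>) \<longleftrightarrow> (\<exists>a\<in>verts H. sat H (\<nu>(x := a)) \<phi>)"

definition models :: "('a, 'c) cgraph \<Rightarrow> 'c fm \<Rightarrow> bool" where
  "models H \<phi> \<longleftrightarrow> (\<forall>\<nu>. sat H \<nu> \<phi>)"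

definition tp :: "nat \<Rightarrow> ('a, 'c) cgraph \<Rightarrow> 'c fm set" where
  "tp k H = {\<phi>. fv \<phi> = {} \<and> qr \<phi> \<le> k \<and> models H \<phi>}"

text \<open>Expansion by a new unary predicate (the colour None) interpreted as W.\<close>
definition expand :: "('a, 'c) cgraph \<Rightarrow> 'a set \<Rightarrow> ('a, 'c option) cgraph" where
  "expand G W = \<lparr>verts = verts G, adj = adj G,
      colr = (\<lambda>c0. case c0 of None \<Rightarrow> W | Some c \<Rightarrow> colr G c)\<rparr>"

definition induced :: "('a, 'c) cgraph \<Rightarrow> 'a set \<Rightarrow> ('a, 'c) cgraph" where
  "induced H S = \<lparr>verts = verts H \<inter> S, adj = (\<lambda>u v. adj H u v \<and> u \<in> S \<and> v \<in> S),
      colr = (\<lambda>c. colr H c \<inter> S)\<rparr>"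

definition walk :: "('a, 'c) cgraph \<Rightarrow> 'a list \<Rightarrow> bool" where
  "walk G p \<longleftrightarrow> p \<noteq> [] \<and> set p \<subseteq> verts G \<and> (\<forall>i. Suc i < length p \<longrightarrow> adj G (p ! i) (p ! Suc i))"

definition gdist :: "('a, 'c) cgraph \<Rightarrow> 'a \<Rightarrow> 'a \<Rightarrow> enat" where
  "gdist G u v = (INF p \<in> {p. walk G p \<and> hd p = u \<and> last p = v}. enat (length p - 1))"

text \<open>Minimum distance between an element of S and one of T (\<infinity> if none).\<close>
definition setdist :: "('a, 'c) cgraph \<Rightarrow> 'a set \<Rightarrow> 'a set \<Rightarrow> enat" where
  "setdist G S T = (INF u \<in> S. INF v \<in> T. gdist G u v)"

definition nbhd :: "('a, 'c) cgraph \<Rightarrow> nat \<Rightarrow> 'a set \<Rightarrow> 'a set" where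
  "nbhd G r S = {v \<in> verts G. \<exists>u \<in> S. gdist G u v \<le> enat r}"

definition ex_in_new :: "nat \<Rightarrow> 'c fm \<Rightarrow> 'c option fm" where
  "ex_in_new x \<phi> = Ex x (Conj (Col None x) (map_fm Some \<phi>))"

end

(*
  Since the two local structures L_A and L_B (the radius 2^(k-1) - 1 neighbourhoods of A and B,
  with X marking A resp. B) have the same k-type and are finite, Duplicator wins the k-round
  Ehrenfeucht-Fraisse game on them.  Spoiler's first move a in A is answered by some b in L_B,
  which lies in B because the marking is preserved.  It remains to show that (w, a) and (w, b)
  satisfy the same formulas of rank k - 1 in G, by a Duplicator strategy in the game on G
  against itself.  With m rounds left, a move within distance 2^m of a pebble or within
  2^m - 1 of A (resp. B) is answered through the game on L_A and L_B by a move near B (resp. A);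
  any other move is copied.  The local game preserves distances up to 2^m, swapped pebbles stay
  at depth at most 2^(k-1) - 2^m, and dist(A, B) > 2^k keeps the two sides non-adjacent, so
  the pebbled configuration remains a partial isomorphism.  The tuple w starts out copied, as
  it is at distance at least 2^k from A and B.
*)

theory Submission
  imports Defs
begin

fun reach :: "('a, 'c) cgraph \<Rightarrow> nat \<Rightarrow> 'a \<Rightarrow> 'a \<Rightarrow> bool" where
  "reach H 0 u v \<longleftrightarrow> u = v \<and> u \<in> verts H"
| "reach H (Suc t) u v \<longleftrightarrow> reach H t u v \<or> (\<exists>z. reach H t u z \<and> adj H z v \<and> v \<in> verts H)"

lemma reach_verts: "reach H t u v \<Longrightarrow> u \<in> verts H \<and> v \<in> verts H"
  by (induction t arbitrary: v) force+

lemma reach_mono: "reach H s u v \<Longrightarrow> s \<le> t \<Longrightarrow> reach H t u v"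
  by (induction t) (auto simp: le_Suc_eq)

lemma reach_refl: "u \<in> verts H \<Longrightarrow> reach H t u u"
  using reach_mono[of H 0 u u t] by simp

lemma reach_trans: "reach H s u v \<Longrightarrow> reach H t v x \<Longrightarrow> reach H (s + t) u x"
  by (induction t arbitrary: x) auto

lemma reach_split: "reach H (s + t) u v \<Longrightarrow> \<exists>z. reach H s u z \<and> reach H t z v"
proof (induction t arbitrary: v)
  case 0
  then show ?case using reach_verts by fastforce
next
  case (Suc t)
  then have "reach H (s + t) u v \<or> (\<exists>z. reach H (s + t) u z \<and> adj H z v \<and> v \<in> verts H)"
    by simp
  then consider "reach H (s + t) u v" | z where "reach H (s + t) u z" "adj H z v" "v \<in> verts H"
    by blast
  then show ?case
  proof cases
    case 1
    then obtain z where "reach H s u z" "reach H t z v"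
      using Suc.IH by blast
    then show ?thesis by auto
  next
    case 2
    then obtain y where "reach H s u y" "reach H t y z"
      using Suc.IH by blast
    then show ?thesis using 2 by auto
  qed
qed

lemma reach_sym:
  assumes "wf_cgraph H" "reach H t u v"
  shows "reach H t v u"
  using assms(2)
proof (induction t arbitrary: v)
  case (Suc t)
  show ?case
  proof (cases "reach H t u v")
    case True
    then show ?thesis using Suc.IH by simp
  next
    case False
    then obtain z where z: "reach H t u z" "adj H z v" "v \<in> verts H"
      using Suc.prems by auto
    have "reach H 1 v z"
      using z assms(1) reach_verts[OF z(1)] unfolding wf_cgraph_def by auto
    from reach_trans[OF this Suc.IH[OF z(1)]] show ?thesis
      by simp
  qed
qed simp

lemma reach_Suc_left:
  "reach H (Suc t) u v \<longleftrightarrow> reach H t u v \<or> (\<exists>z. u \<in> verts H \<and> adj H u z \<and> reach H t z v)"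
proof
  assume "reach H (Suc t) u v"
  then obtain z where "reach H 1 u z" "reach H t z v"
    using reach_split[of H 1 t u v] by auto
  then show "reach H t u v \<or> (\<exists>z. u \<in> verts H \<and> adj H u z \<and> reach H t z v)"
    by auto
next
  assume "reach H t u v \<or> (\<exists>z. u \<in> verts H \<and> adj H u z \<and> reach H t z v)"
  then show "reach H (Suc t) u v"
  proof
    assume "reach H t u v"
    then show ?thesis by simp
  next
    assume "\<exists>z. u \<in> verts H \<and> adj H u z \<and> reach H t z v"
    then obtain z where "u \<in> verts H" "adj H u z" "reach H t z v" by blast
    then have "reach H 1 u z"
      using reach_verts[of H t z v] by auto
    from reach_trans[OF this \<open>reach H t z v\<close>] show ?thesis
      by simp
  qed
qed

lemma walk_Cons: "walk H (u # p) \<longleftrightarrow> u \<in> verts H \<and> (p = [] \<or> adj H u (hd p) \<and> walk H p)"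
  unfolding walk_def by (cases p) (auto simp: All_less_Suc2)

lemma walk_reach: "walk H p \<Longrightarrow> reach H (length p - 1) (hd p) (last p)"
proof (induction p)
  case (Cons u q)
  show ?case
  proof (cases "q = []")
    case True
    then show ?thesis using Cons.prems by (simp add: walk_Cons)
  next
    case False
    then have "u \<in> verts H" "adj H u (hd q)" "reach H (length q - 1) (hd q) (last q)"
      using Cons by (auto simp: walk_Cons)
    then have "reach H (Suc (length q - 1)) u (last q)"
      unfolding reach_Suc_left by blast
    then show ?thesis using False by simp
  qed
qed (simp add: walk_def)

lemma reach_walk: "reach H t u v \<Longrightarrow> \<exists>p. walk H p \<and> hd p = u \<and> last p = v \<and> length p \<le> Suc t"
proof (induction t arbitrary: u)
  case 0
  have "walk H [u] \<and> hd [u] = u \<and> last [u] = v \<and> length [u] \<le> Suc 0"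
    using 0 by (auto simp: walk_def)
  then show ?case by blast
next
  case (Suc t)
  then consider "reach H t u v" | z where "u \<in> verts H" "adj H u z" "reach H t z v"
    unfolding reach_Suc_left by blast
  then show ?case
  proof cases
    case 1
    then show ?thesis using Suc.IH by fastforce
  next
    case 2
    then obtain p where p: "walk H p" "hd p = z" "last p = v" "length p \<le> Suc t"
      using Suc.IH by blast
    have "walk H (u # p)"
      using 2 p by (simp add: walk_Cons)
    moreover have "p \<noteq> []"
      using p(1) by (simp add: walk_def)
    ultimately show ?thesis using p
      by (intro exI[of _ "u # p"]) simp
  qed
qed

lemma gdist_le_iff_reach: "gdist H u v \<le> enat t \<longleftrightarrow> reach H t u v"
proof
  assume "gdist H u v \<le> enat t"
  then obtain p where p: "walk H p" "hd p = u" "last p = v" "enat (length p - 1) < enat (Suc t)"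
    unfolding gdist_def INF_le_iff by (auto dest!: spec[of _ "enat (Suc t)"])
  have "reach H (length p - 1) u v"
    using walk_reach[OF p(1)] p(2,3) by simp
  moreover have "length p - 1 \<le> t"
    using p(4) by simp
  ultimately show "reach H t u v"
    by (rule reach_mono)
next
  assume "reach H t u v"
  from reach_walk[OF this]
  obtain p where p: "walk H p" "hd p = u" "last p = v" "length p \<le> Suc t"
    by blast
  have "gdist H u v \<le> enat (length p - 1)"
    unfolding gdist_def by (rule INF_lower) (use p in simp)
  also have "\<dots> \<le> enat t"
    using p(4) by simp
  finally show "gdist H u v \<le> enat t" .
qed

lemma not_reach_of_setdist:
  assumes "enat t < setdist G S T" "u \<in> S" "v \<in> T"
  shows "\<not> reach G t u v"
proof
  assume "reach G t u v"
  then have "gdist G u v \<le> enat t"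
    by (simp add: gdist_le_iff_reach)
  moreover have "setdist G S T \<le> gdist G u v"
    unfolding setdist_def by (rule INF_lower2[OF assms(2)]) (rule INF_lower[OF assms(3)])
  ultimately show False
    using assms(1) by simp
qed

lemma not_reach_of_setdist_ge:
  assumes "wf_cgraph G" "enat t \<le> setdist G S T" "0 < t" "v \<in> S" "u \<in> T"
  shows "\<not> reach G (t - 1) u v"
proof
  have "enat (t - 1) < enat t"
    using assms(3) by simp
  with assms(2) have "enat (t - 1) < setdist G S T"
    by (rule order.strict_trans2[rotated])
  from not_reach_of_setdist[OF this assms(4,5)] have "\<not> reach G (t - 1) v u" .
  moreover assume "reach G (t - 1) u v"
  ultimately show False
    using reach_sym[OF assms(1)] by blast
qed

definition partial_iso :: "('a, 'd) cgraph \<Rightarrow> (nat \<Rightarrow> 'a) \<Rightarrow> ('b, 'd) cgraph \<Rightarrow> (nat \<Rightarrow> 'b) \<Rightarrow> nat set \<Rightarrow> bool" where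
  "partial_iso H1 \<nu>1 H2 \<nu>2 S \<longleftrightarrow>
     (\<forall>i\<in>S. \<forall>j\<in>S. (\<nu>1 i = \<nu>1 j \<longleftrightarrow> \<nu>2 i = \<nu>2 j) \<and> (adj H1 (\<nu>1 i) (\<nu>1 j) \<longleftrightarrow> adj H2 (\<nu>2 i) (\<nu>2 j)))
     \<and> (\<forall>i\<in>S. \<forall>c. \<nu>1 i \<in> colr H1 c \<longleftrightarrow> \<nu>2 i \<in> colr H2 c)"

fun ef_game :: "nat \<Rightarrow> ('a, 'd) cgraph \<Rightarrow> (nat \<Rightarrow> 'a) \<Rightarrow> ('b, 'd) cgraph \<Rightarrow> (nat \<Rightarrow> 'b) \<Rightarrow> nat set \<Rightarrow> bool" where
  "ef_game 0 H1 \<nu>1 H2 \<nu>2 S \<longleftrightarrow> partial_iso H1 \<nu>1 H2 \<nu>2 S"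
| "ef_game (Suc m) H1 \<nu>1 H2 \<nu>2 S \<longleftrightarrow> partial_iso H1 \<nu>1 H2 \<nu>2 S \<and> (\<forall>x.
     (\<forall>a\<in>verts H1. \<exists>b\<in>verts H2. ef_game m H1 (\<nu>1(x := a)) H2 (\<nu>2(x := b)) (insert x S)) \<and>
     (\<forall>b\<in>verts H2. \<exists>a\<in>verts H1. ef_game m H1 (\<nu>1(x := a)) H2 (\<nu>2(x := b)) (insert x S)))"

lemma partial_iso_sym: "partial_iso H1 \<nu>1 H2 \<nu>2 S \<Longrightarrow> partial_iso H2 \<nu>2 H1 \<nu>1 S"
  unfolding partial_iso_def by auto

lemma partial_iso_cong:
  assumes "partial_iso H1 \<nu>1 H2 \<nu>2 S" "T \<subseteq> S" "\<forall>i\<in>T. \<mu>1 i = \<nu>1 i \<and> \<mu>2 i = \<nu>2 i"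
  shows "partial_iso H1 \<mu>1 H2 \<mu>2 T"
  using assms unfolding partial_iso_def by (metis subsetD)

lemma ef_game_partial_iso: "ef_game m H1 \<nu>1 H2 \<nu>2 S \<Longrightarrow> partial_iso H1 \<nu>1 H2 \<nu>2 S"
  by (cases m) auto

lemma ef_game_forth:
  "ef_game (Suc m) H1 \<nu>1 H2 \<nu>2 S \<Longrightarrow> a \<in> verts H1 \<Longrightarrow>
   \<exists>b\<in>verts H2. ef_game m H1 (\<nu>1(x := a)) H2 (\<nu>2(x := b)) (insert x S)"
  by auto

lemma ef_game_back:
  "ef_game (Suc m) H1 \<nu>1 H2 \<nu>2 S \<Longrightarrow> b \<in> verts H2 \<Longrightarrow>
   \<exists>a\<in>verts H1. ef_game m H1 (\<nu>1(x := a)) H2 (\<nu>2(x := b)) (insert x S)"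
  by auto

lemma ef_game_SucI:
  assumes "partial_iso H1 \<nu>1 H2 \<nu>2 S"
    and "\<And>x a. a \<in> verts H1 \<Longrightarrow> \<exists>b\<in>verts H2. ef_game m H1 (\<nu>1(x := a)) H2 (\<nu>2(x := b)) (insert x S)"
    and "\<And>x b. b \<in> verts H2 \<Longrightarrow> \<exists>a\<in>verts H1. ef_game m H1 (\<nu>1(x := a)) H2 (\<nu>2(x := b)) (insert x S)"
  shows "ef_game (Suc m) H1 \<nu>1 H2 \<nu>2 S"
  using assms by simp

lemma ef_game_sym: "ef_game m H1 \<nu>1 H2 \<nu>2 S \<Longrightarrow> ef_game m H2 \<nu>2 H1 \<nu>1 S"
proof (induction m arbitrary: \<nu>1 \<nu>2 S)
  case 0
  then show ?case by (simp add: partial_iso_sym)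
next
  case (Suc m)
  show ?case
  proof (rule ef_game_SucI)
    show "partial_iso H2 \<nu>2 H1 \<nu>1 S"
      using Suc.prems by (simp add: partial_iso_sym)
  next
    fix x a
    assume "a \<in> verts H2"
    then show "\<exists>b\<in>verts H1. ef_game m H2 (\<nu>2(x := a)) H1 (\<nu>1(x := b)) (insert x S)"
      using ef_game_back[OF Suc.prems] Suc.IH by blast
  next
    fix x b
    assume "b \<in> verts H1"
    then show "\<exists>a\<in>verts H2. ef_game m H2 (\<nu>2(x := a)) H1 (\<nu>1(x := b)) (insert x S)"
      using ef_game_forth[OF Suc.prems] Suc.IH by blast
  qed
qed

lemma ef_game_cong:
  "ef_game m H1 \<nu>1 H2 \<nu>2 S \<Longrightarrow> T \<subseteq> S \<Longrightarrow> \<forall>i\<in>T. \<mu>1 i = \<nu>1 i \<and> \<mu>2 i = \<nu>2 i \<Longrightarrow>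
   ef_game m H1 \<mu>1 H2 \<mu>2 T"
proof (induction m arbitrary: \<nu>1 \<nu>2 \<mu>1 \<mu>2 S T)
  case 0
  then show ?case using partial_iso_cong by simp
next
  case (Suc m)
  have IH: "ef_game m H1 (\<mu>1(x := a)) H2 (\<mu>2(x := b)) (insert x T)"
    if "ef_game m H1 (\<nu>1(x := a)) H2 (\<nu>2(x := b)) (insert x S)" for x a b
    by (rule Suc.IH[OF that]) (use Suc.prems in auto)
  show ?case
  proof (rule ef_game_SucI)
    show "partial_iso H1 \<mu>1 H2 \<mu>2 T"
      using Suc.prems partial_iso_cong ef_game_partial_iso by blast
  next
    fix x a
    assume "a \<in> verts H1"
    then show "\<exists>b\<in>verts H2. ef_game m H1 (\<mu>1(x := a)) H2 (\<mu>2(x := b)) (insert x T)"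
      using ef_game_forth[OF Suc.prems(1)] IH by blast
  next
    fix x b
    assume "b \<in> verts H2"
    then show "\<exists>a\<in>verts H1. ef_game m H1 (\<mu>1(x := a)) H2 (\<mu>2(x := b)) (insert x T)"
      using ef_game_back[OF Suc.prems(1)] IH by blast
  qed
qed

lemma ef_game_SucD: "ef_game (Suc m) H1 \<nu>1 H2 \<nu>2 S \<Longrightarrow> ef_game m H1 \<nu>1 H2 \<nu>2 S"
proof (induction m arbitrary: \<nu>1 \<nu>2 S)
  case (Suc m)
  show ?case
  proof (rule ef_game_SucI)
    show "partial_iso H1 \<nu>1 H2 \<nu>2 S"
      using Suc.prems ef_game_partial_iso by blast
  next
    fix x a
    assume "a \<in> verts H1"
    then show "\<exists>b\<in>verts H2. ef_game m H1 (\<nu>1(x := a)) H2 (\<nu>2(x := b)) (insert x S)"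
      using ef_game_forth[OF Suc.prems] Suc.IH by blast
  next
    fix x b
    assume "b \<in> verts H2"
    then show "\<exists>a\<in>verts H1. ef_game m H1 (\<nu>1(x := a)) H2 (\<nu>2(x := b)) (insert x S)"
      using ef_game_back[OF Suc.prems] Suc.IH by blast
  qed
qed simp

lemma sat_cong: "\<forall>i\<in>fv \<phi>. \<nu> i = \<mu> i \<Longrightarrow> sat H \<nu> \<phi> = sat H \<mu> \<phi>"
proof (induction \<phi> arbitrary: \<nu> \<mu>)
  case (Conj \<phi> \<psi>)
  have "sat H \<nu> \<phi> = sat H \<mu> \<phi>"
    by (rule Conj.IH(1)) (use Conj.prems in simp)
  moreover have "sat H \<nu> \<psi> = sat H \<mu> \<psi>"
    by (rule Conj.IH(2)) (use Conj.prems in simp)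
  ultimately show ?case by simp
next
  case (Ex x \<phi>)
  then have "sat H (\<nu>(x := a)) \<phi> = sat H (\<mu>(x := a)) \<phi>" for a
    by simp
  then show ?case by simp
qed auto

lemma ef_game_sat:
  "ef_game m H1 \<nu>1 H2 \<nu>2 S \<Longrightarrow> fv \<phi> \<subseteq> S \<Longrightarrow> qr \<phi> \<le> m \<Longrightarrow> sat H1 \<nu>1 \<phi> = sat H2 \<nu>2 \<phi>"
proof (induction \<phi> arbitrary: m \<nu>1 \<nu>2 S)
  case (Ex x \<psi>)
  then obtain m' where m: "m = Suc m'" by (cases m) auto
  have IH: "sat H1 (\<nu>1(x := a)) \<psi> = sat H2 (\<nu>2(x := b)) \<psi>"
    if "ef_game m' H1 (\<nu>1(x := a)) H2 (\<nu>2(x := b)) (insert x S)" for a b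
    by (rule Ex.IH[OF that]) (use Ex.prems m in auto)
  have game: "ef_game (Suc m') H1 \<nu>1 H2 \<nu>2 S"
    using Ex.prems(1) m by simp
  show ?case
  proof
    assume "sat H1 \<nu>1 (Ex x \<psi>)"
    then obtain a where a: "a \<in> verts H1" "sat H1 (\<nu>1(x := a)) \<psi>" by auto
    then obtain b where "b \<in> verts H2" "ef_game m' H1 (\<nu>1(x := a)) H2 (\<nu>2(x := b)) (insert x S)"
      using ef_game_forth[OF game] by blast
    then show "sat H2 \<nu>2 (Ex x \<psi>)"
      using IH a(2) by auto
  next
    assume "sat H2 \<nu>2 (Ex x \<psi>)"
    then obtain b where b: "b \<in> verts H2" "sat H2 (\<nu>2(x := b)) \<psi>" by auto
    then obtain a where "a \<in> verts H1" "ef_game m' H1 (\<nu>1(x := a)) H2 (\<nu>2(x := b)) (insert x S)"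
      using ef_game_back[OF game] by blast
    then show "sat H1 \<nu>1 (Ex x \<psi>)"
      using IH b(2) by auto
  qed
qed (auto dest!: ef_game_partial_iso simp: partial_iso_def)

lemma sat_map_Some: "sat (expand G A) \<nu> (map_fm Some \<phi>) = sat G \<nu> \<phi>"
  by (induction \<phi> arbitrary: \<nu>) (auto simp: expand_def)

lemma sat_ex_in_new: "sat (expand G A) \<nu> (ex_in_new n \<phi>) \<longleftrightarrow> (\<exists>a\<in>verts G. a \<in> A \<and> sat G (\<nu>(n := a)) \<phi>)"
  unfolding ex_in_new_def by (simp add: sat_map_Some) (simp add: expand_def)

fun conj_list :: "nat \<Rightarrow> 'c fm list \<Rightarrow> 'c fm" where
  "conj_list x [] = Eq x x"
| "conj_list x (\<phi> # \<phi>s) = Conj \<phi> (conj_list x \<phi>s)"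

lemma sat_conj_list: "sat H \<nu> (conj_list x \<phi>s) \<longleftrightarrow> (\<forall>\<phi>\<in>set \<phi>s. sat H \<nu> \<phi>)"
  by (induction \<phi>s) auto

lemma fv_conj_list: "fv (conj_list x \<phi>s) \<subseteq> insert x (\<Union>\<phi>\<in>set \<phi>s. fv \<phi>)"
  by (induction \<phi>s) auto

lemma qr_conj_list: "\<forall>\<phi>\<in>set \<phi>s. qr \<phi> \<le> m \<Longrightarrow> qr (conj_list x \<phi>s) \<le> m"
  by (induction \<phi>s) auto

lemma distinguishing_Ex:
  assumes "finite (verts H2)" "a \<in> verts H1"
    and "\<forall>b\<in>verts H2. \<exists>\<phi>. fv \<phi> \<subseteq> insert x S \<and> qr \<phi> \<le> m \<and>
           sat H1 (\<nu>1(x := a)) \<phi> \<noteq> sat H2 (\<nu>2(x := b)) \<phi>"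
  shows "\<exists>\<phi>. fv \<phi> \<subseteq> S \<and> qr \<phi> \<le> Suc m \<and> sat H1 \<nu>1 \<phi> \<noteq> sat H2 \<nu>2 \<phi>"
proof -
  obtain g where g: "\<forall>b\<in>verts H2. fv (g b) \<subseteq> insert x S \<and> qr (g b) \<le> m \<and>
      sat H1 (\<nu>1(x := a)) (g b) \<noteq> sat H2 (\<nu>2(x := b)) (g b)"
    using bchoice[OF assms(3)] by blast
  define h where "h b = (if sat H1 (\<nu>1(x := a)) (g b) then g b else Neg (g b))" for b
  have h: "\<forall>b\<in>verts H2. fv (h b) \<subseteq> insert x S \<and> qr (h b) \<le> m \<and>
      sat H1 (\<nu>1(x := a)) (h b) \<and> \<not> sat H2 (\<nu>2(x := b)) (h b)"
    using g unfolding h_def by auto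
  obtain bs where bs: "set bs = verts H2"
    using finite_list[OF assms(1)] by blast
  define \<Phi> where "\<Phi> = Ex x (conj_list x (map h bs))"
  have "fv \<Phi> \<subseteq> S"
    unfolding \<Phi>_def using fv_conj_list[of x "map h bs"] h bs by auto
  moreover have "qr \<Phi> \<le> Suc m"
    unfolding \<Phi>_def using qr_conj_list[of "map h bs" m x] h bs by auto
  moreover have "sat H1 \<nu>1 \<Phi>"
    unfolding \<Phi>_def using assms(2) h bs by (auto simp: sat_conj_list)
  moreover have "\<not> sat H2 \<nu>2 \<Phi>"
    unfolding \<Phi>_def using h bs by (auto simp: sat_conj_list)
  ultimately show ?thesis by blast
qed

lemma partial_iso_distinguishing:
  assumes "\<not> partial_iso H1 \<nu>1 H2 \<nu>2 S"
  shows "\<exists>\<phi>. fv \<phi> \<subseteq> S \<and> qr \<phi> = 0 \<and> sat H1 \<nu>1 \<phi> \<noteq> sat H2 \<nu>2 \<phi>"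
proof -
  from assms consider i j where "i \<in> S" "j \<in> S" "(\<nu>1 i = \<nu>1 j) \<noteq> (\<nu>2 i = \<nu>2 j)"
    | i j where "i \<in> S" "j \<in> S" "adj H1 (\<nu>1 i) (\<nu>1 j) \<noteq> adj H2 (\<nu>2 i) (\<nu>2 j)"
    | i c where "i \<in> S" "(\<nu>1 i \<in> colr H1 c) \<noteq> (\<nu>2 i \<in> colr H2 c)"
    unfolding partial_iso_def by blast
  then show ?thesis
  proof cases
    case 1
    then show ?thesis by (intro exI[of _ "Eq i j"]) simp
  next
    case 2
    then show ?thesis by (intro exI[of _ "Adj i j"]) simp
  next
    case 3
    then show ?thesis by (intro exI[of _ "Col c i"]) simp
  qed
qed

lemma ef_game_distinguishing:
  assumes "finite (verts H1)" "finite (verts H2)"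
  shows "\<not> ef_game m H1 \<nu>1 H2 \<nu>2 S \<Longrightarrow> \<exists>\<phi>. fv \<phi> \<subseteq> S \<and> qr \<phi> \<le> m \<and> sat H1 \<nu>1 \<phi> \<noteq> sat H2 \<nu>2 \<phi>"
proof (induction m arbitrary: \<nu>1 \<nu>2 S)
  case 0
  then show ?case using partial_iso_distinguishing by fastforce
next
  case (Suc m)
  show ?case
  proof (cases "partial_iso H1 \<nu>1 H2 \<nu>2 S")
    case False
    then show ?thesis using partial_iso_distinguishing by fastforce
  next
    case True
    with Suc.prems obtain x where
      "\<not> ((\<forall>a\<in>verts H1. \<exists>b\<in>verts H2. ef_game m H1 (\<nu>1(x := a)) H2 (\<nu>2(x := b)) (insert x S)) \<and>
          (\<forall>b\<in>verts H2. \<exists>a\<in>verts H1. ef_game m H1 (\<nu>1(x := a)) H2 (\<nu>2(x := b)) (insert x S)))"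
      by auto
    then consider
        a where "a \<in> verts H1" "\<forall>b\<in>verts H2. \<not> ef_game m H1 (\<nu>1(x := a)) H2 (\<nu>2(x := b)) (insert x S)"
      | b where "b \<in> verts H2" "\<forall>a\<in>verts H1. \<not> ef_game m H1 (\<nu>1(x := a)) H2 (\<nu>2(x := b)) (insert x S)"
      by blast
    then show ?thesis
    proof cases
      case 1
      have "\<exists>\<phi>. fv \<phi> \<subseteq> insert x S \<and> qr \<phi> \<le> m \<and>
          sat H1 (\<nu>1(x := a)) \<phi> \<noteq> sat H2 (\<nu>2(x := b)) \<phi>" if "b \<in> verts H2" for b
        by (rule Suc.IH) (use 1 that in blast)
      then show ?thesis
        using distinguishing_Ex[OF assms(2) 1(1)] by blast
    next
      case 2
      have "\<exists>\<phi>. fv \<phi> \<subseteq> insert x S \<and> qr \<phi> \<le> m \<and>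
          sat H1 (\<nu>1(x := a)) \<phi> \<noteq> sat H2 (\<nu>2(x := b)) \<phi>" if "a \<in> verts H1" for a
        by (rule Suc.IH) (use 2 that in blast)
      then obtain \<phi> where "fv \<phi> \<subseteq> S" "qr \<phi> \<le> Suc m" "sat H2 \<nu>2 \<phi> \<noteq> sat H1 \<nu>1 \<phi>"
        using distinguishing_Ex[OF assms(1) 2(1)] by (metis (no_types, lifting))
      then show ?thesis by auto
    qed
  qed
qed

lemma tp_eq_imp_ef_game:
  assumes "tp k H1 = tp k H2" "finite (verts H1)" "finite (verts H2)"
  shows "ef_game k H1 \<nu>1 H2 \<nu>2 {}"
proof (rule ccontr)
  assume "\<not> ef_game k H1 \<nu>1 H2 \<nu>2 {}"
  then obtain \<phi> where \<phi>: "fv \<phi> = {}" "qr \<phi> \<le> k" "sat H1 \<nu>1 \<phi> \<noteq> sat H2 \<nu>2 \<phi>"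
    using ef_game_distinguishing[OF assms(2,3)] by blast
  have "sat H1 \<mu>1 \<phi> = sat H1 \<nu>1 \<phi>" "sat H2 \<mu>2 \<phi> = sat H2 \<nu>2 \<phi>" for \<mu>1 \<mu>2
    using sat_cong \<phi>(1) by blast+
  then have "\<phi> \<in> tp k H1 \<longleftrightarrow> sat H1 \<nu>1 \<phi>" "\<phi> \<in> tp k H2 \<longleftrightarrow> sat H2 \<nu>2 \<phi>"
    unfolding tp_def models_def using \<phi>(1,2) by auto
  then show False
    using assms(1) \<phi>(3) by blast
qed

lemma ef_game_reach:
  "ef_game m H1 \<nu>1 H2 \<nu>2 S \<Longrightarrow> i \<in> S \<Longrightarrow> j \<in> S \<Longrightarrow> \<nu>2 ` S \<subseteq> verts H2 \<Longrightarrow>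
   reach H1 (2 ^ m) (\<nu>1 i) (\<nu>1 j) \<Longrightarrow> reach H2 (2 ^ m) (\<nu>2 i) (\<nu>2 j)"
proof (induction m arbitrary: \<nu>1 \<nu>2 S i j)
  case 0
  then have "\<nu>1 i = \<nu>1 j \<or> adj H1 (\<nu>1 i) (\<nu>1 j)"
    by auto
  then have "\<nu>2 i = \<nu>2 j \<or> adj H2 (\<nu>2 i) (\<nu>2 j)"
    using ef_game_partial_iso[OF 0(1)] 0(2,3) unfolding partial_iso_def by blast
  then show ?case
    using 0(2-4) by auto
next
  case (Suc m)
  have "reach H1 (2 ^ m + 2 ^ m) (\<nu>1 i) (\<nu>1 j)"
    using Suc.prems(5) by (simp add: mult_2)
  then obtain z where z: "reach H1 (2 ^ m) (\<nu>1 i) z" "reach H1 (2 ^ m) z (\<nu>1 j)"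
    by (blast dest: reach_split)
  define l where "l = Suc (i + j)"
  have l: "l \<noteq> i" "l \<noteq> j"
    unfolding l_def by auto
  obtain b where b: "b \<in> verts H2" "ef_game m H1 (\<nu>1(l := z)) H2 (\<nu>2(l := b)) (insert l S)"
    using ef_game_forth[OF Suc.prems(1)] reach_verts[OF z(1)] by blast
  have verts: "(\<nu>2(l := b)) ` insert l S \<subseteq> verts H2"
    using Suc.prems(4) b(1) by auto
  have "reach H2 (2 ^ m) (\<nu>2 i) b"
    using Suc.IH[OF b(2) _ _ verts, of i l] Suc.prems(2) z(1) l by simp
  moreover have "reach H2 (2 ^ m) b (\<nu>2 j)"
    using Suc.IH[OF b(2) _ _ verts, of l j] Suc.prems(3) z(2) l by simp
  ultimately have "reach H2 (2 ^ m + 2 ^ m) (\<nu>2 i) (\<nu>2 j)"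
    by (rule reach_trans)
  then show ?case by (simp add: mult_2)
qed

lemma ef_game_reach_colr:
  "ef_game m H1 \<nu>1 H2 \<nu>2 S \<Longrightarrow> i \<in> S \<Longrightarrow> \<nu>2 ` S \<subseteq> verts H2 \<Longrightarrow> u \<in> colr H1 c \<Longrightarrow>
   reach H1 (2 ^ m - 1) u (\<nu>1 i) \<Longrightarrow> \<exists>u'\<in>colr H2 c. reach H2 (2 ^ m - 1) u' (\<nu>2 i)"
proof (induction m arbitrary: \<nu>1 \<nu>2 S i u)
  case 0
  then have "\<nu>2 i \<in> colr H2 c"
    using ef_game_partial_iso[OF 0(1)] unfolding partial_iso_def by auto
  then show ?case
    using 0(2,3) reach_refl by fastforce
next
  case (Suc m)
  have split: "(2::nat) ^ Suc m - 1 = (2 ^ m - 1) + 2 ^ m"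
    by simp
  obtain z where z: "reach H1 (2 ^ m - 1) u z" "reach H1 (2 ^ m) z (\<nu>1 i)"
    using reach_split[OF Suc.prems(5)[unfolded split]] by blast
  define l where "l = Suc i"
  have l: "l \<noteq> i"
    unfolding l_def by auto
  obtain b where b: "b \<in> verts H2" "ef_game m H1 (\<nu>1(l := z)) H2 (\<nu>2(l := b)) (insert l S)"
    using ef_game_forth[OF Suc.prems(1)] reach_verts[OF z(1)] by blast
  have verts: "(\<nu>2(l := b)) ` insert l S \<subseteq> verts H2"
    using Suc.prems(3) b(1) by auto
  obtain u' where u': "u' \<in> colr H2 c" "reach H2 (2 ^ m - 1) u' b"
    using Suc.IH[OF b(2) _ verts Suc.prems(4), of l] z(1) by auto
  have "reach H2 (2 ^ m) b (\<nu>2 i)"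
    using ef_game_reach[OF b(2) _ _ verts, of l i] Suc.prems(2) z(2) l by simp
  from reach_trans[OF u'(2) this] have "reach H2 (2 ^ Suc m - 1) u' (\<nu>2 i)"
    unfolding split .
  with u'(1) show ?case by blast
qed

definition near :: "('a, 'c) cgraph \<Rightarrow> nat \<Rightarrow> 'a set \<Rightarrow> 'a set \<Rightarrow> 'a \<Rightarrow> bool" where
  "near H m U Q a \<longleftrightarrow> (\<exists>u\<in>U. reach H (2 ^ m - 1) u a) \<or> (\<exists>q\<in>Q. reach H (2 ^ m) q a)"

lemma ef_game_near:
  assumes "ef_game m H1 (\<nu>1(x := a)) H2 (\<nu>2(x := b)) (insert x P)" "x \<notin> P"
    and "\<nu>2 ` P \<subseteq> verts H2" "b \<in> verts H2" "near H1 m (colr H1 c) (\<nu>1 ` P) a"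
  shows "near H2 m (colr H2 c) (\<nu>2 ` P) b"
proof -
  have verts: "(\<nu>2(x := b)) ` insert x P \<subseteq> verts H2"
    using assms(2-4) by auto
  from assms(5) consider u where "u \<in> colr H1 c" "reach H1 (2 ^ m - 1) u a"
    | j where "j \<in> P" "reach H1 (2 ^ m) (\<nu>1 j) a"
    unfolding near_def by blast
  then show ?thesis
  proof cases
    case 1
    then show ?thesis
      using ef_game_reach_colr[OF assms(1) _ verts, of x] unfolding near_def by auto
  next
    case 2
    then have "j \<noteq> x"
      using assms(2) by blast
    then have "reach H2 (2 ^ m) (\<nu>2 j) b"
      using ef_game_reach[OF assms(1) _ _ verts, of j x] 2 by simp
    then show ?thesis
      using 2(1) unfolding near_def by blast
  qed
qed

lemma near_mono: "near H m U Q a \<Longrightarrow> U \<subseteq> U' \<Longrightarrow> Q \<subseteq> Q' \<Longrightarrow> near H m U' Q' a"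
  unfolding near_def by blast

lemma near_Suc:
  assumes "near H m U Q a"
  shows "near H (Suc m) U Q a"
proof -
  have "(2::nat) ^ m - 1 \<le> 2 ^ Suc m - 1" "(2::nat) ^ m \<le> 2 ^ Suc m"
    by simp_all
  then show ?thesis
    using assms unfolding near_def by (meson reach_mono)
qed

lemma near_insert: "near H m U (insert q Q) a \<longleftrightarrow> reach H (2 ^ m) q a \<or> near H m U Q a"
  unfolding near_def by blast

lemma not_near_Suc_imp_not_reach:
  assumes "\<not> near H (Suc m) U Q e" "near H m U Q z"
  shows "\<not> reach H (2 ^ m) z e"
proof
  assume ze: "reach H (2 ^ m) z e"
  have "(2::nat) ^ Suc m - 1 = (2 ^ m - 1) + 2 ^ m" "(2::nat) ^ Suc m = 2 ^ m + 2 ^ m"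
    by simp_all
  then have "near H (Suc m) U Q e"
    using assms(2) reach_trans[OF _ ze] unfolding near_def by metis
  with assms(1) show False ..
qed

lemma near_imp_reach:
  assumes "near H m U Q a" "Q \<subseteq> U"
  shows "\<exists>u\<in>U. reach H (2 ^ m) u a"
proof -
  from assms(1) consider u where "u \<in> U" "reach H (2 ^ m - 1) u a"
    | q where "q \<in> Q" "reach H (2 ^ m) q a"
    unfolding near_def by blast
  then show ?thesis
  proof cases
    case 1
    then show ?thesis using reach_mono[OF 1(2), of "2 ^ m"] by auto
  next
    case 2
    then show ?thesis using assms(2) by blast
  qed
qed

lemma nbhd_iff: "x \<in> nbhd G t A \<longleftrightarrow> x \<in> verts G \<and> (\<exists>u\<in>A. reach G t u x)"
  unfolding nbhd_def gdist_le_iff_reach by simp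

lemma nbhd_mono: "s \<le> t \<Longrightarrow> nbhd G s A \<subseteq> nbhd G t A"
  by (auto simp: nbhd_iff) (meson reach_mono)

lemma nbhd_reach_trans: "v \<in> nbhd G D A \<Longrightarrow> reach G t v x \<Longrightarrow> x \<in> nbhd G (D + t) A"
  unfolding nbhd_iff by (meson reach_trans reach_verts)

lemma near_imp_nbhd:
  assumes "near G m A Q a" "Q \<subseteq> nbhd G D A"
  shows "a \<in> nbhd G (D + 2 ^ m) A"
proof -
  from assms(1) consider u where "u \<in> A" "reach G (2 ^ m - 1) u a"
    | q where "q \<in> Q" "reach G (2 ^ m) q a"
    unfolding near_def by blast
  then have "\<exists>u\<in>A. reach G (D + 2 ^ m) u a"
  proof cases
    case 1
    have "(2::nat) ^ m - 1 \<le> D + 2 ^ m"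
      by linarith
    from reach_mono[OF 1(2) this] 1(1) show ?thesis
      by blast
  next
    case 2
    then have "q \<in> nbhd G D A"
      using assms(2) by blast
    then obtain u where "u \<in> A" "reach G D u q"
      unfolding nbhd_iff by blast
    then show ?thesis using reach_trans[OF _ 2(2)] by blast
  qed
  then show ?thesis
    unfolding nbhd_iff by (auto dest: reach_verts)
qed

definition nbhd_struct :: "('a, 'c) cgraph \<Rightarrow> nat \<Rightarrow> 'a set \<Rightarrow> ('a, 'c option) cgraph" where
  "nbhd_struct G r A = induced (expand G A) (nbhd G r A)"

lemma nbhd_struct_simps [simp]:
  "verts (nbhd_struct G r A) = nbhd G r A"
  "adj (nbhd_struct G r A) u v \<longleftrightarrow> adj G u v \<and> u \<in> nbhd G r A \<and> v \<in> nbhd G r A"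
  "colr (nbhd_struct G r A) (Some c) = colr G c \<inter> nbhd G r A"
  "colr (nbhd_struct G r A) None = A \<inter> nbhd G r A"
  unfolding nbhd_struct_def induced_def expand_def nbhd_def by auto

lemma reach_nbhd_struct: "reach (nbhd_struct G r A) t u v \<Longrightarrow> reach G t u v"
proof (induction t arbitrary: v)
  case (Suc t)
  then show ?case
    using nbhd_iff by force
qed (simp add: nbhd_iff)

lemma reach_nbhd_struct_lift:
  "reach G t v x \<Longrightarrow> v \<in> nbhd G D A \<Longrightarrow> D + t \<le> r \<Longrightarrow> reach (nbhd_struct G r A) t v x"
proof (induction t arbitrary: x)
  case 0
  then show ?case
    using nbhd_mono[of D r G A] by auto
next
  case (Suc t)
  show ?case
  proof (cases "reach G t v x")
    case True
    then show ?thesis using Suc by simp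
  next
    case False
    then obtain z where z: "reach G t v z" "adj G z x" "x \<in> verts G"
      using Suc.prems(1) by auto
    have "z \<in> nbhd G (D + t) A" "x \<in> nbhd G (D + Suc t) A"
      using nbhd_reach_trans[OF Suc.prems(2)] z(1) Suc.prems(1) by blast+
    then have "z \<in> nbhd G r A" "x \<in> nbhd G r A"
      using nbhd_mono[of "D + t" r G A] nbhd_mono[of "D + Suc t" r G A] Suc.prems(3) by auto
    then show ?thesis
      using Suc.IH[OF z(1) Suc.prems(2)] Suc.prems(3) z(2) by auto
  qed
qed

lemma near_nbhd_struct:
  assumes "near G m A Q a" "Q \<subseteq> nbhd G D A" "D + 2 ^ m \<le> r"
  shows "near (nbhd_struct G r A) m (colr (nbhd_struct G r A) None) Q a"
  using assms(1) unfolding near_def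
proof (elim disjE bexE)
  fix u
  assume u: "u \<in> A" "reach G (2 ^ m - 1) u a"
  then have "u \<in> nbhd G 0 A"
    using reach_verts unfolding nbhd_iff by fastforce
  moreover have "0 + (2 ^ m - 1) \<le> r"
    using assms(3) by linarith
  ultimately have "reach (nbhd_struct G r A) (2 ^ m - 1) u a" "u \<in> nbhd G r A"
    using reach_nbhd_struct_lift[OF u(2)] nbhd_mono[of 0 r G A] by auto
  moreover have "u \<in> colr (nbhd_struct G r A) None"
    using u(1) calculation(2) by simp
  ultimately show "(\<exists>u\<in>colr (nbhd_struct G r A) None. reach (nbhd_struct G r A) (2 ^ m - 1) u a) \<or>
      (\<exists>q\<in>Q. reach (nbhd_struct G r A) (2 ^ m) q a)"
    by blast
next
  fix q
  assume q: "q \<in> Q" "reach G (2 ^ m) q a"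
  then have "reach (nbhd_struct G r A) (2 ^ m) q a"
    using reach_nbhd_struct_lift[OF q(2) _ assms(3)] assms(2) by blast
  with q(1) show "(\<exists>u\<in>colr (nbhd_struct G r A) None. reach (nbhd_struct G r A) (2 ^ m - 1) u a) \<or>
      (\<exists>q\<in>Q. reach (nbhd_struct G r A) (2 ^ m) q a)"
    by blast
qed

lemma near_of_nbhd_struct:
  "near (nbhd_struct G r A) m (colr (nbhd_struct G r A) None) Q a \<Longrightarrow> near G m A Q a"
  unfolding near_def nbhd_struct_simps(4) by (blast dest: reach_nbhd_struct)

lemma partial_iso_of_nbhd_struct:
  assumes "partial_iso (nbhd_struct G r A) \<nu>1 (nbhd_struct G s B) \<nu>2 S"
    and "\<nu>1 ` S \<subseteq> nbhd G r A" "\<nu>2 ` S \<subseteq> nbhd G s B"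
  shows "partial_iso G \<nu>1 G \<nu>2 S"
  unfolding partial_iso_def
proof (intro conjI ballI allI)
  fix i j
  assume ij: "i \<in> S" "j \<in> S"
  then have "\<nu>1 i \<in> nbhd G r A" "\<nu>1 j \<in> nbhd G r A" "\<nu>2 i \<in> nbhd G s B" "\<nu>2 j \<in> nbhd G s B"
    using assms(2,3) by auto
  moreover have "(\<nu>1 i = \<nu>1 j) = (\<nu>2 i = \<nu>2 j)"
    "adj (nbhd_struct G r A) (\<nu>1 i) (\<nu>1 j) = adj (nbhd_struct G s B) (\<nu>2 i) (\<nu>2 j)"
    using assms(1) ij unfolding partial_iso_def by blast+
  ultimately show "(\<nu>1 i = \<nu>1 j) = (\<nu>2 i = \<nu>2 j)" "adj G (\<nu>1 i) (\<nu>1 j) = adj G (\<nu>2 i) (\<nu>2 j)"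
    by simp_all
next
  fix i c
  assume i: "i \<in> S"
  then have "\<nu>1 i \<in> colr (nbhd_struct G r A) (Some c) \<longleftrightarrow> \<nu>2 i \<in> colr (nbhd_struct G s B) (Some c)"
    using assms(1) unfolding partial_iso_def by blast
  moreover have "\<nu>1 i \<in> nbhd G r A" "\<nu>2 i \<in> nbhd G s B"
    using assms(2,3) i by auto
  ultimately show "(\<nu>1 i \<in> colr G c) = (\<nu>2 i \<in> colr G c)"
    by simp
qed

definition apart :: "('a, 'c) cgraph \<Rightarrow> 'a \<Rightarrow> 'a \<Rightarrow> bool" where
  "apart G u v \<longleftrightarrow> u \<noteq> v \<and> \<not> adj G u v \<and> \<not> adj G v u"

lemma apart_sym: "apart G u v \<Longrightarrow> apart G v u"
  unfolding apart_def by blast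

lemma not_reach_imp_apart:
  assumes "wf_cgraph G" "u \<in> verts G" "\<not> reach G 1 u v"
  shows "apart G u v"
  using assms unfolding apart_def wf_cgraph_def by auto

lemma not_near_imp_apart:
  assumes "wf_cgraph G" "\<not> near G m U Q e" "q \<in> Q" "q \<in> verts G"
  shows "apart G e q"
proof -
  have "\<not> reach G (2 ^ m) q e"
    using assms(2,3) unfolding near_def by blast
  then have "\<not> reach G 1 q e"
    using reach_mono[of G 1 q e "2 ^ m"] by auto
  from not_reach_imp_apart[OF assms(1,4) this] show ?thesis
    by (rule apart_sym)
qed

lemma partial_iso_same: "\<forall>i\<in>S. \<nu>1 i = \<nu>2 i \<Longrightarrow> partial_iso H \<nu>1 H \<nu>2 S"
  unfolding partial_iso_def by simp

lemma partial_iso_Un: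
  assumes "partial_iso H1 \<nu>1 H2 \<nu>2 S" "partial_iso H1 \<nu>1 H2 \<nu>2 T"
    and "\<And>i j. i \<in> S \<Longrightarrow> j \<in> T \<Longrightarrow> apart H1 (\<nu>1 i) (\<nu>1 j) \<and> apart H2 (\<nu>2 i) (\<nu>2 j)"
  shows "partial_iso H1 \<nu>1 H2 \<nu>2 (S \<union> T)"
  using assms unfolding partial_iso_def apart_def by (metis Un_iff)

lemma diff_pow2_le: "(2::nat) ^ j - 2 ^ m \<le> 2 ^ j - 1"
proof -
  have "(1::nat) \<le> 2 ^ m"
    by simp
  then show ?thesis
    by linarith
qed

lemma two_pow_pred: "1 \<le> k \<Longrightarrow> (2::nat) ^ k = 2 * 2 ^ (k - 1)"
  by (metis Suc_diff_le diff_Suc_1 power_Suc)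

lemma depth_arith:
  assumes "Suc m < k"
  shows "(2::nat) ^ (k - 1) - 2 ^ Suc m + 2 ^ m = 2 ^ (k - 1) - 2 ^ m"
proof -
  have "(2::nat) ^ Suc m \<le> 2 ^ (k - 1)"
    by (rule power_increasing) (use assms in auto)
  then show ?thesis
    by simp
qed

definition paired_pebbles ::
  "('a, 'c) cgraph \<Rightarrow> nat \<Rightarrow> 'a set \<Rightarrow> 'a set \<Rightarrow> nat \<Rightarrow> (nat \<Rightarrow> 'a) \<Rightarrow> (nat \<Rightarrow> 'a) \<Rightarrow> nat set \<Rightarrow> bool" where
  "paired_pebbles G k A B m fA fB P \<longleftrightarrow>
     fA ` P \<subseteq> nbhd G (2 ^ (k - 1) - 2 ^ m) A \<and> fB ` P \<subseteq> nbhd G (2 ^ (k - 1) - 2 ^ m) B \<and>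
     ef_game m (nbhd_struct G (2 ^ (k - 1) - 1) A) fA (nbhd_struct G (2 ^ (k - 1) - 1) B) fB P"

lemma paired_pebbles_sym: "paired_pebbles G k A B m fA fB P \<Longrightarrow> paired_pebbles G k B A m fB fA P"
  unfolding paired_pebbles_def by (simp add: ef_game_sym)

lemma paired_pebbles_cong:
  assumes "paired_pebbles G k A B m fA fB P" "P' \<subseteq> P" "\<forall>i\<in>P'. gA i = fA i \<and> gB i = fB i"
  shows "paired_pebbles G k A B m gA gB P'"
proof -
  have "gA ` P' \<subseteq> fA ` P" "gB ` P' \<subseteq> fB ` P"
    using assms(2,3) by force+
  then show ?thesis
    using assms ef_game_cong unfolding paired_pebbles_def by (meson order_trans)
qed

lemma paired_pebbles_Suc:
  assumes "paired_pebbles G k A B (Suc m) fA fB P"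
  shows "paired_pebbles G k A B m fA fB P"
proof -
  have mono: "nbhd G (2 ^ (k - 1) - 2 ^ Suc m) S \<subseteq> nbhd G (2 ^ (k - 1) - 2 ^ m) S" for S
    by (rule nbhd_mono) simp
  from assms show ?thesis
    unfolding paired_pebbles_def using subset_trans[OF _ mono] ef_game_SucD by metis
qed

lemma paired_pebbles_in_nbhds:
  assumes "paired_pebbles G k A B m fA fB P"
  shows "fA ` P \<subseteq> nbhd G (2 ^ (k - 1) - 1) A" "fB ` P \<subseteq> nbhd G (2 ^ (k - 1) - 1) B"
proof -
  have "nbhd G (2 ^ (k - 1) - 2 ^ m) S \<subseteq> nbhd G (2 ^ (k - 1) - 1) S" for S
    by (rule nbhd_mono[OF diff_pow2_le])
  then show "fA ` P \<subseteq> nbhd G (2 ^ (k - 1) - 1) A" "fB ` P \<subseteq> nbhd G (2 ^ (k - 1) - 1) B"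
    using assms unfolding paired_pebbles_def by (meson subset_trans)+
qed

definition pick :: "nat set \<Rightarrow> (nat \<Rightarrow> 'a) \<Rightarrow> (nat \<Rightarrow> 'a) \<Rightarrow> nat \<Rightarrow> 'a" where
  "pick V f g i = (if i \<in> V then f i else g i)"

lemma pick_image_Un: "pick V f g ` P \<union> pick V g f ` P = f ` P \<union> g ` P"
  by (auto simp: pick_def)

text \<open>The invariant of Duplicator's strategy on \<open>G\<close> against itself with \<open>m\<close> rounds left.  For \<open>i \<in> Vab\<close> the left pebble lies near \<open>A\<close> and the right one near \<open>B\<close>, for
  \<open>i \<in> Vba\<close> the other way round; \<open>pick Vab \<nu>L \<nu>R\<close> collects the pebbles near \<open>A\<close>, which are
  matched with those near \<open>B\<close> in the game on the two local structures.\<close>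

definition swap_inv ::
  "('a, 'c) cgraph \<Rightarrow> nat \<Rightarrow> 'a set \<Rightarrow> 'a set \<Rightarrow> nat \<Rightarrow> (nat \<Rightarrow> 'a) \<Rightarrow> (nat \<Rightarrow> 'a) \<Rightarrow>
   nat set \<Rightarrow> nat set \<Rightarrow> nat set \<Rightarrow> bool" where
  "swap_inv G k A B m \<nu>L \<nu>R Vi Vab Vba \<longleftrightarrow>
     Vi \<inter> Vab = {} \<and> Vi \<inter> Vba = {} \<and> Vab \<inter> Vba = {} \<and> m < k \<and>
     paired_pebbles G k A B m (pick Vab \<nu>L \<nu>R) (pick Vab \<nu>R \<nu>L) (Vab \<union> Vba) \<and>
     (\<forall>i\<in>Vi. \<nu>L i = \<nu>R i \<and> \<nu>L i \<in> verts G \<and>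
        \<not> near G m (A \<union> B) (\<nu>L ` (Vab \<union> Vba) \<union> \<nu>R ` (Vab \<union> Vba)) (\<nu>L i))"

lemma swap_inv_swap:
  "swap_inv G k A B m \<nu>L \<nu>R Vi Vab Vba \<Longrightarrow> swap_inv G k B A m \<nu>R \<nu>L Vi Vab Vba"
  unfolding swap_inv_def by (simp add: paired_pebbles_sym Un_commute) fastforce

lemma swap_inv_relabel:
  assumes "swap_inv G k A B m \<nu>L \<nu>R Vi Vab Vba"
  shows "swap_inv G k B A m \<nu>L \<nu>R Vi Vba Vab"
proof -
  have agree: "\<forall>i\<in>Vba \<union> Vab. pick Vba \<nu>L \<nu>R i = pick Vab \<nu>R \<nu>L i \<and> pick Vba \<nu>R \<nu>L i = pick Vab \<nu>L \<nu>R i"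
    using assms unfolding swap_inv_def pick_def by auto
  have "paired_pebbles G k B A m (pick Vab \<nu>R \<nu>L) (pick Vab \<nu>L \<nu>R) (Vab \<union> Vba)"
    using paired_pebbles_sym assms unfolding swap_inv_def by blast
  then have "paired_pebbles G k B A m (pick Vba \<nu>L \<nu>R) (pick Vba \<nu>R \<nu>L) (Vba \<union> Vab)"
    by (rule paired_pebbles_cong) (use agree in auto)
  then show ?thesis
    using assms unfolding swap_inv_def by (auto simp: Un_commute)
qed

lemma swap_inv_remove:
  assumes "swap_inv G k A B m \<nu>L \<nu>R Vi Vab Vba"
  shows "swap_inv G k A B m \<nu>L \<nu>R (Vi - {x}) (Vab - {x}) (Vba - {x})"
proof -
  have P: "(Vab - {x}) \<union> (Vba - {x}) \<subseteq> Vab \<union> Vba"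
    by blast
  have "\<forall>i\<in>(Vab - {x}) \<union> (Vba - {x}).
      pick (Vab - {x}) \<nu>L \<nu>R i = pick Vab \<nu>L \<nu>R i \<and> pick (Vab - {x}) \<nu>R \<nu>L i = pick Vab \<nu>R \<nu>L i"
    unfolding pick_def by auto
  then have "paired_pebbles G k A B m (pick (Vab - {x}) \<nu>L \<nu>R) (pick (Vab - {x}) \<nu>R \<nu>L) ((Vab - {x}) \<union> (Vba - {x}))"
    using paired_pebbles_cong[OF _ P] assms unfolding swap_inv_def by blast
  moreover have "\<not> near G m (A \<union> B) (\<nu>L ` ((Vab - {x}) \<union> (Vba - {x})) \<union> \<nu>R ` ((Vab - {x}) \<union> (Vba - {x})))
      (\<nu>L i)" if "i \<in> Vi" for i
  proof -
    have "\<not> near G m (A \<union> B) (\<nu>L ` (Vab \<union> Vba) \<union> \<nu>R ` (Vab \<union> Vba)) (\<nu>L i)"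
      using assms that unfolding swap_inv_def by blast
    moreover have "\<nu>L ` ((Vab - {x}) \<union> (Vba - {x})) \<union> \<nu>R ` ((Vab - {x}) \<union> (Vba - {x}))
        \<subseteq> \<nu>L ` (Vab \<union> Vba) \<union> \<nu>R ` (Vab \<union> Vba)"
      using P by blast
    ultimately show ?thesis
      by (meson near_mono order_refl)
  qed
  ultimately show ?thesis
    using assms unfolding swap_inv_def by blast
qed

lemma swap_inv_identical_not_reach:
  assumes "swap_inv G k A B (Suc m) \<nu>L \<nu>R Vi Vab Vba" "i \<in> Vi"
    and "near G m U Q a" "U \<subseteq> A \<union> B" "Q \<subseteq> \<nu>L ` (Vab \<union> Vba) \<union> \<nu>R ` (Vab \<union> Vba)"
  shows "\<not> reach G (2 ^ m) a (\<nu>L i)"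
proof -
  have "\<not> near G (Suc m) (A \<union> B) (\<nu>L ` (Vab \<union> Vba) \<union> \<nu>R ` (Vab \<union> Vba)) (\<nu>L i)"
    using assms(1,2) unfolding swap_inv_def by blast
  moreover have "near G m (A \<union> B) (\<nu>L ` (Vab \<union> Vba) \<union> \<nu>R ` (Vab \<union> Vba)) a"
    using near_mono[OF assms(3-5)] .
  ultimately show ?thesis
    by (rule not_near_Suc_imp_not_reach)
qed

lemma swap_inv_insert_pebble:
  assumes inv: "swap_inv G k A B (Suc m) \<nu>L \<nu>R Vi Vab Vba" and x: "x \<notin> Vi \<union> Vab \<union> Vba"
    and pebbles: "paired_pebbles G k A B m ((pick Vab \<nu>L \<nu>R)(x := a)) ((pick Vab \<nu>R \<nu>L)(x := b))
      (insert x (Vab \<union> Vba))"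
    and far: "\<forall>i\<in>Vi. \<not> reach G (2 ^ m) a (\<nu>L i) \<and> \<not> reach G (2 ^ m) b (\<nu>L i)"
  shows "swap_inv G k A B m (\<nu>L(x := a)) (\<nu>R(x := b)) Vi (insert x Vab) Vba"
proof -
  let ?Q = "\<nu>L ` (Vab \<union> Vba) \<union> \<nu>R ` (Vab \<union> Vba)"
  have pick: "pick (insert x Vab) (\<nu>L(x := a)) (\<nu>R(x := b)) = (pick Vab \<nu>L \<nu>R)(x := a)"
    "pick (insert x Vab) (\<nu>R(x := b)) (\<nu>L(x := a)) = (pick Vab \<nu>R \<nu>L)(x := b)"
    by (auto simp: pick_def)
  have Q: "(\<nu>L(x := a)) ` (insert x Vab \<union> Vba) \<union> (\<nu>R(x := b)) ` (insert x Vab \<union> Vba) = insert a (insert b ?Q)"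
    using x by auto
  have "\<not> near G m (A \<union> B) (insert a (insert b ?Q)) (\<nu>L i)" if "i \<in> Vi" for i
  proof -
    from inv that have "\<not> near G (Suc m) (A \<union> B) ?Q (\<nu>L i)"
      unfolding swap_inv_def by blast
    then have "\<not> near G m (A \<union> B) ?Q (\<nu>L i)"
      by (meson near_Suc)
    with far that show ?thesis
      unfolding near_insert by blast
  qed
  with inv x show ?thesis
    using pebbles unfolding swap_inv_def pick Q by auto
qed

lemma swap_inv_insert_identical:
  assumes inv: "swap_inv G k A B (Suc m) \<nu>L \<nu>R Vi Vab Vba" and x: "x \<notin> Vi \<union> Vab \<union> Vba"
    and a: "a \<in> verts G" "\<not> near G m (A \<union> B) (\<nu>L ` (Vab \<union> Vba) \<union> \<nu>R ` (Vab \<union> Vba)) a"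
  shows "swap_inv G k A B m (\<nu>L(x := a)) (\<nu>R(x := a)) (insert x Vi) Vab Vba"
proof -
  have "paired_pebbles G k A B m (pick Vab \<nu>L \<nu>R) (pick Vab \<nu>R \<nu>L) (Vab \<union> Vba)"
    using inv paired_pebbles_Suc unfolding swap_inv_def by blast
  then have "paired_pebbles G k A B m (pick Vab (\<nu>L(x := a)) (\<nu>R(x := a))) (pick Vab (\<nu>R(x := a)) (\<nu>L(x := a)))
      (Vab \<union> Vba)"
    by (rule paired_pebbles_cong) (use x in \<open>auto simp: pick_def\<close>)
  moreover have "(\<nu>L(x := a)) ` (Vab \<union> Vba) = \<nu>L ` (Vab \<union> Vba)" "(\<nu>R(x := a)) ` (Vab \<union> Vba) = \<nu>R ` (Vab \<union> Vba)"
    using x by auto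
  moreover have "\<not> near G m (A \<union> B) (\<nu>L ` (Vab \<union> Vba) \<union> \<nu>R ` (Vab \<union> Vba)) (\<nu>L i)" if "i \<in> Vi" for i
  proof -
    from inv that have "\<not> near G (Suc m) (A \<union> B) (\<nu>L ` (Vab \<union> Vba) \<union> \<nu>R ` (Vab \<union> Vba)) (\<nu>L i)"
      unfolding swap_inv_def by blast
    then show ?thesis
      by (meson near_Suc)
  qed
  ultimately show ?thesis
    using inv x a unfolding swap_inv_def by auto
qed

locale twin_nbhds =
  fixes G :: "('a, 'c) cgraph" and k :: nat and A B :: "'a set"
  assumes wf: "wf_cgraph G" and k_pos: "1 \<le> k"
    and far_apart: "\<forall>a\<in>A. \<forall>b\<in>B. \<not> reach G (2 ^ k) a b"
    and same_type: "\<forall>\<nu>1 \<nu>2. ef_game k (nbhd_struct G (2 ^ (k - 1) - 1) A) \<nu>1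
                                        (nbhd_struct G (2 ^ (k - 1) - 1) B) \<nu>2 {}"
begin

lemma swap: "twin_nbhds G k B A"
proof
  show "\<forall>b\<in>B. \<forall>a\<in>A. \<not> reach G (2 ^ k) b a"
    using far_apart reach_sym[OF wf] by blast
  show "\<forall>\<nu>1 \<nu>2. ef_game k (nbhd_struct G (2 ^ (k - 1) - 1) B) \<nu>1 (nbhd_struct G (2 ^ (k - 1) - 1) A) \<nu>2 {}"
    using same_type ef_game_sym by blast
qed (use wf k_pos in auto)

lemma nbhds_apart:
  assumes "u \<in> nbhd G (2 ^ (k - 1) - 1) A" "v \<in> nbhd G (2 ^ (k - 1) - 1) B"
  shows "apart G u v"
proof (rule not_reach_imp_apart[OF wf])
  let ?r = "2 ^ (k - 1) - 1 :: nat"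
  obtain a where a: "a \<in> A" "reach G ?r a u"
    using assms(1) unfolding nbhd_iff by blast
  obtain b where b: "b \<in> B" "reach G ?r v b"
    using assms(2) reach_sym[OF wf] unfolding nbhd_iff by blast
  show "u \<in> verts G"
    using assms(1) unfolding nbhd_iff by blast
  have "?r + 1 + ?r \<le> 2 ^ k"
    using two_pow_pred[OF k_pos] by simp
  show "\<not> reach G 1 u v"
  proof
    assume "reach G 1 u v"
    from reach_trans[OF reach_trans[OF a(2) this] b(2)] have "reach G (?r + 1 + ?r) a b" .
    from reach_mono[OF this \<open>?r + 1 + ?r \<le> 2 ^ k\<close>] have "reach G (2 ^ k) a b" .
    with a(1) b(1) far_apart show False
      by blast
  qed
qed

lemma swap_inv_swapped_partial_iso:
  assumes inv: "swap_inv G k A B m \<nu>L \<nu>R Vi Vab Vba"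
  shows "partial_iso G \<nu>L G \<nu>R (Vab \<union> Vba)"
proof -
  let ?P = "Vab \<union> Vba" and ?fA = "pick Vab \<nu>L \<nu>R" and ?fB = "pick Vab \<nu>R \<nu>L"
  have pebbles: "paired_pebbles G k A B m ?fA ?fB ?P" and disj: "Vab \<inter> Vba = {}"
    using inv unfolding swap_inv_def by blast+
  note depth = paired_pebbles_in_nbhds[OF pebbles]
  have "ef_game m (nbhd_struct G (2 ^ (k - 1) - 1) A) ?fA (nbhd_struct G (2 ^ (k - 1) - 1) B) ?fB ?P"
    using pebbles unfolding paired_pebbles_def by blast
  from partial_iso_of_nbhd_struct[OF ef_game_partial_iso[OF this] depth]
  have local: "partial_iso G ?fA G ?fB ?P" .
  have sides_apart: "apart G (?fA i) (?fB j)" if "i \<in> ?P" "j \<in> ?P" for i j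
    using nbhds_apart depth that by blast
  have "partial_iso G \<nu>L G \<nu>R Vab"
    by (rule partial_iso_cong[OF local]) (auto simp: pick_def)
  moreover have "partial_iso G \<nu>L G \<nu>R Vba"
    by (rule partial_iso_cong[OF partial_iso_sym[OF local]]) (use disj in \<open>auto simp: pick_def\<close>)
  moreover have "apart G (\<nu>L i) (\<nu>L j) \<and> apart G (\<nu>R i) (\<nu>R j)" if "i \<in> Vab" "j \<in> Vba" for i j
  proof -
    have "j \<notin> Vab"
      using that disj by blast
    then have "apart G (\<nu>L i) (\<nu>L j)" "apart G (\<nu>R j) (\<nu>R i)"
      using sides_apart[of i j] sides_apart[of j i] that by (simp_all add: pick_def)
    then show ?thesis
      using apart_sym[of G "\<nu>R j" "\<nu>R i"] by blast
  qed
  ultimately show ?thesis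
    by (rule partial_iso_Un)
qed

lemma swap_inv_identical_apart:
  assumes inv: "swap_inv G k A B m \<nu>L \<nu>R Vi Vab Vba" and "i \<in> Vi" "j \<in> Vab \<union> Vba"
  shows "apart G (\<nu>L i) (\<nu>L j) \<and> apart G (\<nu>R i) (\<nu>R j)"
proof -
  let ?P = "Vab \<union> Vba"
  have "paired_pebbles G k A B m (pick Vab \<nu>L \<nu>R) (pick Vab \<nu>R \<nu>L) ?P"
    using inv unfolding swap_inv_def by blast
  from paired_pebbles_in_nbhds[OF this]
  have "pick Vab \<nu>L \<nu>R ` ?P \<union> pick Vab \<nu>R \<nu>L ` ?P \<subseteq> verts G"
    unfolding nbhd_def by blast
  then have "\<nu>L ` ?P \<union> \<nu>R ` ?P \<subseteq> verts G"
    unfolding pick_image_Un .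
  moreover have "\<nu>L i = \<nu>R i" "\<not> near G m (A \<union> B) (\<nu>L ` ?P \<union> \<nu>R ` ?P) (\<nu>L i)"
    using inv assms(2) unfolding swap_inv_def by blast+
  ultimately show ?thesis
    using not_near_imp_apart[OF wf] assms(3) by (metis UnCI imageI subsetD)
qed

lemma swap_inv_partial_iso:
  assumes inv: "swap_inv G k A B m \<nu>L \<nu>R Vi Vab Vba"
  shows "partial_iso G \<nu>L G \<nu>R (Vi \<union> Vab \<union> Vba)"
proof -
  have "\<forall>i\<in>Vi. \<nu>L i = \<nu>R i"
    using inv unfolding swap_inv_def by blast
  from partial_iso_Un[OF partial_iso_same[OF this] swap_inv_swapped_partial_iso[OF inv]
      swap_inv_identical_apart[OF inv]]
  show ?thesis
    by (simp add: Un_assoc)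
qed

lemma swap_inv_step_near_A:
  assumes inv: "swap_inv G k A B (Suc m) \<nu>L \<nu>R Vi Vab Vba" and x: "x \<notin> Vi \<union> Vab \<union> Vba"
    and near_a: "near G m A (pick Vab \<nu>L \<nu>R ` (Vab \<union> Vba)) a"
  shows "\<exists>b\<in>verts G. swap_inv G k A B m (\<nu>L(x := a)) (\<nu>R(x := b)) Vi (insert x Vab) Vba"
proof -
  let ?P = "Vab \<union> Vba" and ?fA = "pick Vab \<nu>L \<nu>R" and ?fB = "pick Vab \<nu>R \<nu>L"
  let ?LA = "nbhd_struct G (2 ^ (k - 1) - 1) A" and ?LB = "nbhd_struct G (2 ^ (k - 1) - 1) B"
  let ?D = "2 ^ (k - 1) - 2 ^ Suc m"
  have pebbles: "paired_pebbles G k A B (Suc m) ?fA ?fB ?P" and m: "Suc m < k"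
    using inv unfolding swap_inv_def by blast+
  then have depth: "?fA ` ?P \<subseteq> nbhd G ?D A" "?fB ` ?P \<subseteq> nbhd G ?D B"
    and game: "ef_game (Suc m) ?LA ?fA ?LB ?fB ?P"
    unfolding paired_pebbles_def by blast+
  note depth' = pebbles[THEN paired_pebbles_Suc, unfolded paired_pebbles_def]
  note arith = depth_arith[OF m]
  have a_nbhd: "a \<in> nbhd G (2 ^ (k - 1) - 2 ^ m) A"
    using near_imp_nbhd[OF near_a depth(1)] unfolding arith .
  then have "a \<in> verts ?LA"
    using nbhd_mono[OF diff_pow2_le, of G "k - 1" m A] by auto
  with ef_game_forth[OF game] obtain b where b: "b \<in> verts ?LB"
    and game': "ef_game m ?LA (?fA(x := a)) ?LB (?fB(x := b)) (insert x ?P)"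
    by blast
  have near_local: "near ?LA m (colr ?LA None) (?fA ` ?P) a"
    using near_nbhd_struct[OF near_a depth(1)] arith diff_pow2_le by simp
  have "x \<notin> ?P"
    using x by blast
  from ef_game_near[OF game' this _ b near_local]
  have "near ?LB m (colr ?LB None) (?fB ` ?P) b"
    using paired_pebbles_in_nbhds(2)[OF pebbles] by simp
  then have near_b: "near G m B (?fB ` ?P) b"
    by (rule near_of_nbhd_struct)
  have b_nbhd: "b \<in> nbhd G (2 ^ (k - 1) - 2 ^ m) B"
    using near_imp_nbhd[OF near_b depth(2)] unfolding arith .
  have pebbles': "paired_pebbles G k A B m (?fA(x := a)) (?fB(x := b)) (insert x ?P)"
    unfolding paired_pebbles_def using game' a_nbhd b_nbhd depth' x by auto
  have sub: "?fA ` ?P \<subseteq> \<nu>L ` ?P \<union> \<nu>R ` ?P" "?fB ` ?P \<subseteq> \<nu>L ` ?P \<union> \<nu>R ` ?P"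
    unfolding pick_image_Un[of Vab \<nu>L \<nu>R ?P, symmetric] by (rule Un_upper1, rule Un_upper2)
  have "\<forall>i\<in>Vi. \<not> reach G (2 ^ m) a (\<nu>L i) \<and> \<not> reach G (2 ^ m) b (\<nu>L i)"
    using swap_inv_identical_not_reach[OF inv _ near_a Un_upper1 sub(1)]
      swap_inv_identical_not_reach[OF inv _ near_b Un_upper2 sub(2)] by blast
  moreover have "b \<in> verts G"
    using b_nbhd unfolding nbhd_iff by blast
  ultimately show ?thesis
    using swap_inv_insert_pebble[OF inv x pebbles'] by blast
qed

lemma swap_inv_step_near_B:
  assumes inv: "swap_inv G k A B (Suc m) \<nu>L \<nu>R Vi Vab Vba" and x: "x \<notin> Vi \<union> Vab \<union> Vba"
    and near_a: "near G m B (pick Vab \<nu>R \<nu>L ` (Vab \<union> Vba)) a"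
  shows "\<exists>b\<in>verts G. swap_inv G k A B m (\<nu>L(x := a)) (\<nu>R(x := b)) Vi Vab (insert x Vba)"
proof -
  have "Vab \<inter> Vba = {}"
    using inv unfolding swap_inv_def by blast
  then have "pick Vba \<nu>L \<nu>R ` (Vba \<union> Vab) = pick Vab \<nu>R \<nu>L ` (Vab \<union> Vba)"
    by (force simp: pick_def)
  with near_a have "near G m B (pick Vba \<nu>L \<nu>R ` (Vba \<union> Vab)) a"
    by simp
  moreover have "x \<notin> Vi \<union> Vba \<union> Vab"
    using x by blast
  ultimately show ?thesis
    using twin_nbhds.swap_inv_step_near_A[OF swap swap_inv_relabel[OF inv]] swap_inv_relabel by blast
qed

lemma swap_inv_step:
  assumes inv: "swap_inv G k A B (Suc m) \<nu>L \<nu>R Vi Vab Vba" and x: "x \<notin> Vi \<union> Vab \<union> Vba"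
    and a: "a \<in> verts G"
  shows "\<exists>b\<in>verts G. \<exists>Vi' Vab' Vba'. swap_inv G k A B m (\<nu>L(x := a)) (\<nu>R(x := b)) Vi' Vab' Vba' \<and>
           Vi' \<union> Vab' \<union> Vba' = insert x (Vi \<union> Vab \<union> Vba)"
proof -
  let ?P = "Vab \<union> Vba"
  have "\<nu>L ` ?P \<union> \<nu>R ` ?P = pick Vab \<nu>L \<nu>R ` ?P \<union> pick Vab \<nu>R \<nu>L ` ?P"
    by (auto simp: pick_def)
  then consider (near_A) "near G m A (pick Vab \<nu>L \<nu>R ` ?P) a"
    | (near_B) "near G m B (pick Vab \<nu>R \<nu>L ` ?P) a"
    | (far) "\<not> near G m (A \<union> B) (\<nu>L ` ?P \<union> \<nu>R ` ?P) a"
    unfolding near_def by blast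
  then show ?thesis
  proof cases
    case near_A
    then obtain b where "b \<in> verts G" "swap_inv G k A B m (\<nu>L(x := a)) (\<nu>R(x := b)) Vi (insert x Vab) Vba"
      using swap_inv_step_near_A[OF inv x] by blast
    moreover have "Vi \<union> insert x Vab \<union> Vba = insert x (Vi \<union> Vab \<union> Vba)"
      by blast
    ultimately show ?thesis by blast
  next
    case near_B
    then obtain b where "b \<in> verts G" "swap_inv G k A B m (\<nu>L(x := a)) (\<nu>R(x := b)) Vi Vab (insert x Vba)"
      using swap_inv_step_near_B[OF inv x] by blast
    moreover have "Vi \<union> Vab \<union> insert x Vba = insert x (Vi \<union> Vab \<union> Vba)"
      by blast
    ultimately show ?thesis by blast
  next
    case far
    have "insert x Vi \<union> Vab \<union> Vba = insert x (Vi \<union> Vab \<union> Vba)"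
      by blast
    then show ?thesis
      using swap_inv_insert_identical[OF inv x a far] a by blast
  qed
qed

end

lemma twin_nbhdsI:
  assumes "wf_cgraph G" "1 \<le> k" "enat (2 ^ k) < setdist G A B"
    and "tp k (nbhd_struct G (2 ^ (k - 1) - 1) A) = tp k (nbhd_struct G (2 ^ (k - 1) - 1) B)"
  shows "twin_nbhds G k A B"
proof
  have "nbhd G r S \<subseteq> verts G" for r S
    unfolding nbhd_def by blast
  moreover have "finite (verts G)"
    using assms(1) unfolding wf_cgraph_def by blast
  ultimately have fin: "finite (verts (nbhd_struct G r S))" for r S
    using finite_subset by (metis nbhd_struct_simps(1))
  show "\<forall>\<nu>1 \<nu>2. ef_game k (nbhd_struct G (2 ^ (k - 1) - 1) A) \<nu>1 (nbhd_struct G (2 ^ (k - 1) - 1) B) \<nu>2 {}"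
    using tp_eq_imp_ef_game[OF assms(4) fin fin] by blast
  show "\<forall>a\<in>A. \<forall>b\<in>B. \<not> reach G (2 ^ k) a b"
    using not_reach_of_setdist[OF assms(3)] by blast
qed (use assms(1,2) in auto)

lemma swap_inv_ef_game:
  assumes "twin_nbhds G k A B" "swap_inv G k A B m \<nu>L \<nu>R Vi Vab Vba"
  shows "ef_game m G \<nu>L G \<nu>R (Vi \<union> Vab \<union> Vba)"
  using assms
proof (induction m arbitrary: A B \<nu>L \<nu>R Vi Vab Vba)
  case 0
  then show ?case
    using twin_nbhds.swap_inv_partial_iso by fastforce
next
  case (Suc m)
  let ?V = "Vi \<union> Vab \<union> Vba"
  have inv: "swap_inv G k A B (Suc m) \<nu>L \<nu>R (Vi - {x}) (Vab - {x}) (Vba - {x})" for x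
    using swap_inv_remove[OF Suc.prems(2)] .
  have x: "x \<notin> (Vi - {x}) \<union> (Vab - {x}) \<union> (Vba - {x})"
    and V: "insert x ((Vi - {x}) \<union> (Vab - {x}) \<union> (Vba - {x})) = insert x ?V" for x
    by blast+
  show ?case
  proof (rule ef_game_SucI)
    show "partial_iso G \<nu>L G \<nu>R ?V"
      using twin_nbhds.swap_inv_partial_iso Suc.prems by blast
  next
    fix x a
    assume "a \<in> verts G"
    then obtain b Vi' Vab' Vba' where "b \<in> verts G"
      "swap_inv G k A B m (\<nu>L(x := a)) (\<nu>R(x := b)) Vi' Vab' Vba'"
      "Vi' \<union> Vab' \<union> Vba' = insert x ?V"
      using twin_nbhds.swap_inv_step[OF Suc.prems(1) inv x] V by metis
    then show "\<exists>b\<in>verts G. ef_game m G (\<nu>L(x := a)) G (\<nu>R(x := b)) (insert x ?V)"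
      using Suc.IH[OF Suc.prems(1)] by metis
  next
    fix x b
    assume "b \<in> verts G"
    then obtain a Vi' Vab' Vba' where "a \<in> verts G"
      "swap_inv G k B A m (\<nu>R(x := b)) (\<nu>L(x := a)) Vi' Vab' Vba'"
      "Vi' \<union> Vab' \<union> Vba' = insert x ?V"
      using twin_nbhds.swap_inv_step[OF twin_nbhds.swap[OF Suc.prems(1)] swap_inv_swap[OF inv] x] V
      by metis
    then show "\<exists>a\<in>verts G. ef_game m G (\<nu>L(x := a)) G (\<nu>R(x := b)) (insert x ?V)"
      using Suc.IH[OF twin_nbhds.swap[OF Suc.prems(1)]] ef_game_sym by metis
  qed
qed

context twin_nbhds
begin

lemma swap_inv_init:
  assumes ab: "a \<in> A" "b \<in> B" "a \<in> verts G" "b \<in> verts G"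
    and game: "ef_game (k - 1) (nbhd_struct G (2 ^ (k - 1) - 1) A) (\<nu>(n := a))
                               (nbhd_struct G (2 ^ (k - 1) - 1) B) (\<nu>(n := b)) {n}"
    and far: "\<forall>i<n. \<nu> i \<in> verts G \<and> (\<forall>u\<in>A \<union> B. \<not> reach G (2 ^ k - 1) u (\<nu> i))"
  shows "swap_inv G k A B (k - 1) (\<nu>(n := a)) (\<nu>(n := b)) {0..<n} {n} {}"
proof -
  have "pick {n} (\<nu>(n := a)) (\<nu>(n := b)) n = a" "pick {n} (\<nu>(n := b)) (\<nu>(n := a)) n = b"
    by (simp_all add: pick_def)
  moreover have "a \<in> nbhd G 0 A" "b \<in> nbhd G 0 B"
    using ab unfolding nbhd_iff by auto
  ultimately have "paired_pebbles G k A B (k - 1) (pick {n} (\<nu>(n := a)) (\<nu>(n := b)))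
      (pick {n} (\<nu>(n := b)) (\<nu>(n := a))) {n}"
    unfolding paired_pebbles_def using ef_game_cong[OF game order_refl] by simp
  moreover have "\<not> near G (k - 1) (A \<union> B) ((\<nu>(n := a)) ` ({n} \<union> {}) \<union> (\<nu>(n := b)) ` ({n} \<union> {})) (\<nu> i)"
    if "i < n" for i
  proof
    assume near: "near G (k - 1) (A \<union> B) ((\<nu>(n := a)) ` ({n} \<union> {}) \<union> (\<nu>(n := b)) ` ({n} \<union> {})) (\<nu> i)"
    have "(\<nu>(n := a)) ` ({n} \<union> {}) \<union> (\<nu>(n := b)) ` ({n} \<union> {}) \<subseteq> A \<union> B"
      using ab by auto
    from near_imp_reach[OF near this] obtain u where u: "u \<in> A \<union> B" "reach G (2 ^ (k - 1)) u (\<nu> i)"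
      by blast
    have "(1::nat) \<le> 2 ^ (k - 1)"
      by simp
    with two_pow_pred[OF k_pos] have "(2::nat) ^ (k - 1) \<le> 2 ^ k - 1"
      by linarith
    from reach_mono[OF u(2) this] u(1) far that show False
      by blast
  qed
  ultimately show ?thesis
    using far k_pos unfolding swap_inv_def by auto
qed

lemma ex_in_new_transfer:
  assumes far: "\<forall>i<n. \<nu> i \<in> verts G \<and> (\<forall>u\<in>A \<union> B. \<not> reach G (2 ^ k - 1) u (\<nu> i))"
    and \<phi>: "qr \<phi> \<le> k - 1" "fv \<phi> \<subseteq> {0..n}"
    and sat_A: "sat (expand G A) \<nu> (ex_in_new n \<phi>)"
  shows "sat (expand G B) \<nu> (ex_in_new n \<phi>)"
proof -
  let ?LA = "nbhd_struct G (2 ^ (k - 1) - 1) A" and ?LB = "nbhd_struct G (2 ^ (k - 1) - 1) B"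
  obtain a where a: "a \<in> verts G" "a \<in> A" "sat G (\<nu>(n := a)) \<phi>"
    using sat_A unfolding sat_ex_in_new by blast
  have game0: "ef_game (Suc (k - 1)) ?LA \<nu> ?LB \<nu> {}"
    using same_type k_pos by simp
  have a_nbhd: "a \<in> nbhd G (2 ^ (k - 1) - 1) A"
    using a(1,2) reach_refl[of a G] unfolding nbhd_iff by blast
  then have a_local: "a \<in> colr ?LA None"
    using a(2) by simp
  from a_nbhd have "a \<in> verts ?LA"
    by simp
  from ef_game_forth[OF game0 this, of n] obtain b where b: "b \<in> verts ?LB"
    and game: "ef_game (k - 1) ?LA (\<nu>(n := a)) ?LB (\<nu>(n := b)) {n}"
    by blast
  have "(\<nu>(n := a)) n \<in> colr ?LA None \<longleftrightarrow> (\<nu>(n := b)) n \<in> colr ?LB None"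
    using ef_game_partial_iso[OF game] unfolding partial_iso_def by blast
  with a_local have "b \<in> colr ?LB None"
    by simp
  then have b_B: "b \<in> B" "b \<in> verts G"
    by (auto simp: nbhd_iff)
  have "ef_game (k - 1) G (\<nu>(n := a)) G (\<nu>(n := b)) ({0..<n} \<union> {n} \<union> {})"
    using swap_inv_ef_game[OF twin_nbhds_axioms swap_inv_init[OF a(2) b_B(1) a(1) b_B(2) game far]] .
  then have "sat G (\<nu>(n := b)) \<phi>"
    using ef_game_sat \<phi> a(3) by fastforce
  with b_B show ?thesis
    unfolding sat_ex_in_new by blast
qed

end

theorem theorem4p2:
  fixes G :: "('a, 'c::finite) cgraph" and k n :: nat and A B :: "'a set"
    and w :: "'a list" and \<phi> :: "'c fm"
  assumes "wf_cgraph G" and "k \<ge> 1"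
    and "A \<subseteq> verts G" and "B \<subseteq> verts G"
    and "setdist G A B > enat (2 ^ k)"
    and "tp k (induced (expand G A) (nbhd G (2 ^ (k - 1) - 1) A))
         = tp k (induced (expand G B) (nbhd G (2 ^ (k - 1) - 1) B))"
    and "length w = n" and "set w \<subseteq> verts G"
    and "setdist G (set w) (A \<union> B) \<ge> enat (2 ^ k)"
    and "qr \<phi> \<le> k - 1" and "fv \<phi> \<subseteq> {0..n}"
  shows "sat (expand G A) (\<lambda>i. w ! i) (ex_in_new n \<phi>)
     \<longleftrightarrow> sat (expand G B) (\<lambda>i. w ! i) (ex_in_new n \<phi>)"
proof -
  interpret twin_nbhds G k A B
    using twin_nbhdsI assms(1,2,5,6) unfolding nbhd_struct_def by blast
  have "\<forall>i<n. w ! i \<in> verts G \<and> (\<forall>u\<in>A \<union> B. \<not> reach G (2 ^ k - 1) u (w ! i))"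
    using assms(7,8) not_reach_of_setdist_ge[OF assms(1,9)] by auto
  then show ?thesis
    using ex_in_new_transfer twin_nbhds.ex_in_new_transfer[OF swap] assms(10,11)
    by (metis Un_commute)
qed

end
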